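(* Let $\sum_{n=1}^{\infty}x_n$ be a conditionally convergent series of reals and $I$ an ideal on $\mathbb{N}$ containing $\mathrm{Fin}$. Write $x^{+}=\max\{x,0\}$, $x^{-}=\max\{-x,0\}$. Then: (1) $SR_I(x_n)=\{\sum_{n=1}^{\infty}x_n\}$ if and only if $\sum_{n\in A}|x_n|<\infty$ for every $A\in I$; (2) if there exists $A\in I$ with $\sum_{n\in A}x_n^{+}=\sum_{n\in A}x_n^{-}=\infty$, then $SR_I(x_n)=\mathbb{R}$; (3) if there exists $A\in I$ with $\sum_{n\in A}x_n^{+}=\infty$, and every $A\in I$ with $\sum_{n\in A}x_n^{+}=\infty$ satisfies $\sum_{n\in A}x_n^{-}<\infty$, then $SR_I(x_n)\supseteq(-\infty,\sum_{n=1}^{\infty}x_n]$; (4) if there exists $B\in I$ with $\sum_{n\in B}x_n^{-}=\infty$, and every $B\in I$ with $\sum_{n\in B}x_n^{-}=\infty$ satisfies $\sum_{n\in B}x_n^{+}<\infty$, then $SR_I(x_n)\supseteq[\sum_{n=1}^{\infty}x_n,\infty)$. Moreover, for every conditionally convergent series exactly one of the four hypotheses (the condition in (1), and the hypotheses of (2), (3), (4)) holds.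
   Context: An ideal on $\mathbb{N}$ is a family $I\subseteq P(\mathbb{N})$ closed under finite unions and subsets with $\mathbb{N}\notin I$; $\mathrm{Fin}$ is the ideal of finite sets. $S_\infty$ is the set of permutations of $\mathbb{N}$, and for $\sigma\in S_\infty$, $\mathrm{supp}(\sigma)=\{n:\sigma(n)\neq n\}$. The ideally supported sum range is $SR_I(x_n)=\{\sum_{n=1}^{\infty}x_{\sigma(n)} : \sigma\in S_\infty,\ \mathrm{supp}(\sigma)\in I,\ \sum_{n}x_{\sigma(n)}\text{ converges}\}$. *)

theory Defs
  imports "HOL-Analysis.Analysis"
begin

definition ideal_on_nat :: "nat set set \<Rightarrow> bool" where
  "ideal_on_nat I \<longleftrightarrow>
     (\<forall>A\<in>I. \<forall>B\<in>I. A \<union> B \<in> I) \<and>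
     (\<forall>A\<in>I. \<forall>B. B \<subseteq> A \<longrightarrow> B \<in> I) \<and>
     UNIV \<notin> I"

definition supp :: "(nat \<Rightarrow> nat) \<Rightarrow> nat set" where
  "supp \<sigma> = {n. \<sigma> n \<noteq> n}"

definition SR :: "nat set set \<Rightarrow> (nat \<Rightarrow> real) \<Rightarrow> real set" where
  "SR I x = {s. \<exists>\<sigma>. bij \<sigma> \<and> supp \<sigma> \<in> I \<and> (\<lambda>n. x (\<sigma> n)) sums s}"

definition conditionally_convergent :: "(nat \<Rightarrow> real) \<Rightarrow> bool" where
  "conditionally_convergent x \<longleftrightarrow> summable x \<and> \<not> summable (\<lambda>n. \<bar>x n\<bar>)"

definition pos_part :: "real \<Rightarrow> real" where "pos_part t = max t 0"
definition neg_part :: "real \<Rightarrow> real" where "neg_part t = max (- t) 0"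

end

theory Submission
  imports Defs
begin

text \<open>
  To lower the sum of \<open>\<Sum>x\<^sub>n\<close> by \<open>c > 0\<close> with a permutation supported on a set \<open>P\<close> of
  positive terms whose sum diverges, hold back terms of \<open>P\<close> in a finite buffer: a term of \<open>P\<close> is
  held while the buffer total is at most \<open>c\<close>, and the oldest held term is released whenever the
  total exceeds \<open>c\<close>. Releases take place at the positions of a sparse subsequence \<open>t\<close> of \<open>P\<close>
  with summable terms, and the displaced terms \<open>x (t k)\<close> are put in order into the positions that
  became free. Since \<open>x\<^sub>n \<rightarrow> 0\<close>, the buffer total tends to \<open>c\<close> and every held term is
  eventually released; the partial sums of the rearranged series are those of \<open>x\<close>, minus the
  buffer, plus the difference of two partial sums of \<open>\<Sum>x (t k)\<close>, so they tend to
  \<open>\<Sum>x\<^sub>n - c\<close>.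

  Hence a divergent positive (negative) part on some \<open>A \<in> I\<close> gives every value below (above)
  the sum, while a permutation whose support carries an absolutely summable part of the series
  cannot change the sum.
\<close>

lemma card_range_Int_lessThan:
  assumes "strict_mono f"
  shows "card (range f \<inter> {..<f k}) = k"
proof -
  have "range f \<inter> {..<f k} = f ` {..<k}"
    using strict_mono_less[OF assms] by auto
  then show ?thesis
    using strict_mono_imp_inj_on[OF assms] by (simp add: card_image inj_on_subset)
qed

lemma card_Int_lessThan_strict_mono:
  fixes D :: "nat set"
  assumes "a \<in> D" "a < b"
  shows "card (D \<inter> {..<a}) < card (D \<inter> {..<b})"
  by (rule psubset_card_mono) (use assms in auto)

lemma bij_betw_card_Int_lessThan:
  fixes D :: "nat set"
  assumes "infinite D"
  shows "bij_betw (\<lambda>n. card (D \<inter> {..<n})) D UNIV"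
proof (rule bij_betw_imageI)
  show "inj_on (\<lambda>n. card (D \<inter> {..<n})) D"
    by (rule linorder_inj_onI') (use card_Int_lessThan_strict_mono in fastforce)
  have "range (enumerate D) = D"
    using bij_enumerate[OF assms] by (simp add: bij_betw_def)
  then have "card (D \<inter> {..<enumerate D k}) = k" for k
    using card_range_Int_lessThan[OF strict_mono_enumerate[OF assms]] by simp
  then have "k \<in> (\<lambda>n. card (D \<inter> {..<n})) ` D" for k
    by (intro image_eqI[where x = "enumerate D k"] enumerate_in_set[OF assms]) simp
  then show "(\<lambda>n. card (D \<inter> {..<n})) ` D = UNIV"
    by blast
qed

lemma sum_if_mem_card_Int_lessThan:
  fixes D :: "nat set" and g :: "nat \<Rightarrow> 'a::comm_monoid_add"
  shows "(\<Sum>n<N. if n \<in> D then g (card (D \<inter> {..<n})) else 0) = (\<Sum>k<card (D \<inter> {..<N}). g k)"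
proof (induction N)
  case (Suc N)
  have "D \<inter> {..<Suc N} = (if N \<in> D then insert N (D \<inter> {..<N}) else D \<inter> {..<N})"
    by (auto simp: less_Suc_eq)
  then show ?case using Suc by (cases "N \<in> D") auto
qed simp

lemma filterlim_card_Int_lessThan:
  fixes D :: "nat set"
  assumes "infinite D"
  shows "filterlim (\<lambda>n. card (D \<inter> {..<n})) at_top sequentially"
  unfolding filterlim_at_top
proof
  fix k
  have "k \<in> (\<lambda>n. card (D \<inter> {..<n})) ` D"
    using bij_betw_card_Int_lessThan[OF assms] by (simp add: bij_betw_def)
  then obtain n where n: "n \<in> D" "card (D \<inter> {..<n}) = k"
    by blast
  have "k \<le> card (D \<inter> {..<m})" if "n \<le> m" for m
    unfolding n(2)[symmetric] by (rule card_mono) (use that in auto)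
  then show "\<forall>\<^sub>F m in sequentially. k \<le> card (D \<inter> {..<m})"
    by (rule eventually_sequentiallyI)
qed

lemma nat_exists_transition:
  assumes "Q a" "\<not> Q b" "a \<le> b"
  shows "\<exists>n\<ge>a. Q n \<and> \<not> Q (Suc n)"
  using assms(3,2) by (induction b rule: dec_induct) (use assms(1) in auto)

lemma unbounded_sum_Int_lessThan_if_not_summable_on:
  fixes f :: "nat \<Rightarrow> real"
  assumes nonneg: "\<And>n. n \<in> S \<Longrightarrow> 0 \<le> f n" and not_summable: "\<not> f summable_on S"
  shows "\<exists>n. B < sum f (S \<inter> {..<n})"
proof (rule ccontr)
  assume "\<not> ?thesis"
  then have bound: "sum f (S \<inter> {..<n}) \<le> B" for n
    by (simp add: not_less)
  have "sum f F \<le> B" if "F \<subseteq> S" "finite F" for F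
  proof -
    have "F \<subseteq> S \<inter> {..<Suc (Max F)}"
      using that by (auto simp: le_imp_less_Suc)
    then have "sum f F \<le> sum f (S \<inter> {..<Suc (Max F)})"
      by (intro sum_mono2) (use nonneg in auto)
    with bound[of "Suc (Max F)"] show ?thesis by linarith
  qed
  then have "f summable_on S"
    by (intro nonneg_bdd_above_summable_on nonneg bdd_aboveI2) auto
  with not_summable show False ..
qed

locale delayed_rearrangement =
  fixes x :: "nat \<Rightarrow> real" and P :: "nat set" and c :: real and t :: "nat \<Rightarrow> nat"
  assumes x_summable: "summable x"
    and x_pos: "\<And>n. n \<in> P \<Longrightarrow> 0 < x n"
    and not_summable_off_t: "\<not> x summable_on (P - range t)"
    and t_strict_mono: "strict_mono t"
    and range_t_subset: "range t \<subseteq> P"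
    and t_summable: "summable (\<lambda>k. x (t k))"
    and c_pos: "0 < c"
begin

text \<open>\<open>held n\<close> is the buffer just before position \<open>n\<close>. Indices enter it in increasing order,
  so its minimum is the oldest held term.\<close>

primrec held :: "nat \<Rightarrow> nat set" where
  "held 0 = {}"
| "held (Suc n) =
     (if n \<in> range t then (if c < sum x (held n) then held n - {Min (held n)} else held n)
      else if n \<in> P \<and> sum x (held n) \<le> c then insert n (held n) else held n)"

abbreviation level :: "nat \<Rightarrow> real" where
  "level n \<equiv> sum x (held n)"

definition release :: "nat \<Rightarrow> bool" where
  "release n \<longleftrightarrow> n \<in> range t \<and> c < level n"

definition hold :: "nat \<Rightarrow> bool" where
  "hold n \<longleftrightarrow> n \<in> P \<and> n \<notin> range t \<and> level n \<le> c"

lemma release_not_hold: "release n \<Longrightarrow> \<not> hold n"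
  by (auto simp: release_def hold_def)

lemma held_Suc:
  "held (Suc n) =
     (if release n then held n - {Min (held n)} else if hold n then insert n (held n) else held n)"
  by (auto simp: release_def hold_def)

declare held.simps(2) [simp del]

lemma finite_held: "finite (held n)"
  by (induction n) (auto simp: held_Suc)

lemma held_subset_lessThan: "held n \<subseteq> {..<n}"
  by (induction n) (auto simp: held_Suc)

lemma held_subset_hold: "held n \<subseteq> {m. hold m}"
  by (induction n) (auto simp: held_Suc)

lemma held_subset: "held n \<subseteq> P"
  using held_subset_hold by (auto simp: hold_def)

lemma level_nonneg: "0 \<le> level n"
  using held_subset x_pos by (intro sum_nonneg) (auto intro: less_imp_le)

lemma Min_held_mem: "release n \<Longrightarrow> Min (held n) \<in> held n"
  using c_pos finite_held by (intro Min_in) (auto simp: release_def)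

lemma held_Int_lessThan: "n \<le> m \<Longrightarrow> held m \<inter> {..<n} \<subseteq> held n"
  by (induction m rule: dec_induct) (auto simp: held_Suc)

lemma level_Suc:
  "level (Suc n) =
     (if release n then level n - x (Min (held n)) else if hold n then level n + x n else level n)"
proof -
  have "n \<notin> held n"
    using held_subset_lessThan by blast
  then show ?thesis
    using Min_held_mem[of n] finite_held[of n] by (auto simp: held_Suc sum_diff1 release_not_hold)
qed

lemma level_Suc_if_le:
  "level n \<le> c \<Longrightarrow> level (Suc n) = level n + (if n \<in> P - range t then x n else 0)"
  by (auto simp: level_Suc release_def hold_def)

lemma held_Suc_if_gt:
  "c < level n \<Longrightarrow> held (Suc n) = (if n \<in> range t then held n - {Min (held n)} else held n)"
  by (auto simp: held_Suc release_def hold_def)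

lemma not_eventually_level_le: "\<not> (\<forall>n\<ge>N. level n \<le> c)"
proof
  assume le: "\<forall>n\<ge>N. level n \<le> c"
  let ?S = "P - range t"
  have level_eq: "level n + sum x (?S \<inter> {..<N}) = level N + sum x (?S \<inter> {..<n})" if "N \<le> n" for n
    using that
  proof (induction n rule: dec_induct)
    case (step n)
    have "?S \<inter> {..<Suc n} = (if n \<in> ?S then insert n (?S \<inter> {..<n}) else ?S \<inter> {..<n})"
      by (auto simp: less_Suc_eq)
    then show ?case
      using step le level_Suc_if_le[of n] by auto
  qed simp
  obtain n where n: "c + sum x (?S \<inter> {..<N}) < sum x (?S \<inter> {..<n})"
    using unbounded_sum_Int_lessThan_if_not_summable_on not_summable_off_t x_pos
    by (metis DiffD1 less_imp_le)
  have "sum x (?S \<inter> {..<n}) \<le> sum x (?S \<inter> {..<max n N})"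
    using x_pos by (intro sum_mono2) (auto intro: less_imp_le)
  moreover have "level (max n N) \<le> c"
    using le by simp
  ultimately show False
    using n level_eq[OF max.cobounded2, of n] level_nonneg[of N] by linarith
qed

lemma not_eventually_level_gt: "\<not> (\<forall>n\<ge>N. c < level n)"
proof
  assume gt: "\<forall>n\<ge>N. c < level n"
  have card_eq: "card (held n) + card (range t \<inter> {..<n}) = card (held N) + card (range t \<inter> {..<N})"
    if "N \<le> n" for n
    using that
  proof (induction n rule: dec_induct)
    case (step n)
    have "c < level n"
      using gt step(1) by simp
    moreover from this have "held n \<noteq> {}"
      using c_pos by auto
    then have "Min (held n) \<in> held n" "0 < card (held n)"
      using finite_held[of n] by (auto simp: card_gt_0_iff)
    with \<open>c < level n\<close> show ?case
      using step(3) finite_held[of n] held_Suc_if_gt[of n]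
      by (cases "n \<in> range t") (auto simp: lessThan_Suc)
  qed simp
  define k where "k = card (held N) + N + 1"
  have "N \<le> t k"
    using strict_mono_imp_increasing[OF t_strict_mono, of k] by (simp add: k_def)
  moreover have "card (range t \<inter> {..<N}) \<le> N"
    using card_mono[of "{..<N}" "range t \<inter> {..<N}"] by simp
  ultimately show False
    using card_eq[of "t k"] card_range_Int_lessThan[OF t_strict_mono, of k] by (simp add: k_def)
qed

lemma release_frequently: "\<exists>n\<ge>N. release n"
proof (rule ccontr)
  assume no_release: "\<not> ?thesis"
  have level_mono: "level m \<le> level n" if "N \<le> m" "m \<le> n" for m n
    using that(2)
  proof (induction n rule: dec_induct)
    case (step n)
    then show ?case
      using that(1) no_release level_Suc[of n] x_pos[of n] by (auto simp: hold_def)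
  qed simp
  obtain m where m: "N \<le> m" "c < level m"
    using not_eventually_level_le[of N] by auto
  have "m \<le> t m"
    by (rule strict_mono_imp_increasing[OF t_strict_mono])
  then have "release (t m)"
    using level_mono[of m "t m"] m by (auto simp: release_def)
  with \<open>m \<le> t m\<close> m(1) no_release show False by auto
qed

lemma hold_frequently: "\<exists>n\<ge>N. hold n"
proof (rule ccontr)
  assume no_hold: "\<not> ?thesis"
  have level_antimono: "level n \<le> level m" if "N \<le> m" "m \<le> n" for m n
    using that(2)
  proof (induction n rule: dec_induct)
    case (step n)
    have "release n \<Longrightarrow> 0 < x (Min (held n))"
      using Min_held_mem held_subset x_pos by blast
    then show ?case
      using step that(1) no_hold level_Suc[of n] by auto
  qed simp
  obtain m where m: "N \<le> m" "level m \<le> c"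
    using not_eventually_level_gt[of N] by auto
  have "infinite (P - range t)"
    using not_summable_off_t summable_on_finite by blast
  then obtain n where n: "m \<le> n" "n \<in> P - range t"
    using infinite_nat_iff_unbounded_le by blast
  then have "hold n"
    using level_antimono[of m n] m by (auto simp: hold_def)
  with n m(1) no_hold show False by auto
qed

lemma held_eventually_disjoint_lessThan: "\<exists>N. \<forall>n\<ge>N. held n \<inter> {..<m} = {}"
proof (induction m)
  case (Suc m)
  then obtain N where N: "\<And>n. N \<le> n \<Longrightarrow> held n \<inter> {..<m} = {}"
    by auto
  have "\<exists>n\<ge>max N (Suc m). m \<notin> held n"
  proof (rule ccontr)
    assume "\<not> ?thesis"
    then have m_held: "\<And>n. max N (Suc m) \<le> n \<Longrightarrow> m \<in> held n"
      by auto
    obtain n where n: "max N (Suc m) \<le> n" "release n"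
      using release_frequently by blast
    have "Min (held n) = m"
      using m_held[OF n(1)] N[of n] n(1) finite_held[of n] by (intro Min_eqI) auto
    then have "m \<notin> held (Suc n)"
      using n(2) by (simp add: held_Suc)
    with m_held[of "Suc n"] n(1) show False
      by simp
  qed
  then obtain n0 where n0: "max N (Suc m) \<le> n0" "m \<notin> held n0"
    by blast
  have "held n \<inter> {..<Suc m} = {}" if "n0 \<le> n" for n
    using N[of n] held_Int_lessThan[OF that] n0 that by (fastforce simp: less_Suc_eq)
  then show ?case
    by blast
qed simp

lemma level_small_steps:
  assumes "0 < \<epsilon>"
  shows "\<exists>N. \<forall>n\<ge>N.
    (c < level n \<longrightarrow> level n - \<epsilon> < level (Suc n) \<and> level (Suc n) \<le> level n) \<and>
    (level n \<le> c \<longrightarrow> level n \<le> level (Suc n) \<and> level (Suc n) < level n + \<epsilon>)"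
proof -
  obtain N0 where N0: "\<And>n. N0 \<le> n \<Longrightarrow> \<bar>x n\<bar> < \<epsilon>"
    using LIMSEQ_D[OF summable_LIMSEQ_zero[OF x_summable] assms] by auto
  obtain N1 where N1: "\<And>n. N1 \<le> n \<Longrightarrow> held n \<inter> {..<N0} = {}"
    using held_eventually_disjoint_lessThan by blast
  have "(c < level n \<longrightarrow> level n - \<epsilon> < level (Suc n) \<and> level (Suc n) \<le> level n) \<and>
    (level n \<le> c \<longrightarrow> level n \<le> level (Suc n) \<and> level (Suc n) < level n + \<epsilon>)"
    if "max N0 N1 \<le> n" for n
  proof -
    have "release n \<Longrightarrow> 0 < x (Min (held n)) \<and> x (Min (held n)) < \<epsilon>"
      using Min_held_mem[of n] held_subset x_pos N1[of n] N0[of "Min (held n)"] that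
      by (fastforce simp: not_less[symmetric])
    moreover have "hold n \<Longrightarrow> 0 < x n \<and> x n < \<epsilon>"
      using x_pos N0[of n] that by (auto simp: hold_def)
    ultimately show ?thesis
      using level_Suc[of n] assms by (auto simp: release_def hold_def)
  qed
  then show ?thesis
    by blast
qed

lemma level_tendsto: "level \<longlonglongrightarrow> c"
proof (rule LIMSEQ_I)
  fix r :: real
  assume "0 < r"
  then obtain N where steps: "\<And>n. N \<le> n \<Longrightarrow>
    (c < level n \<longrightarrow> level n - r < level (Suc n) \<and> level (Suc n) \<le> level n) \<and>
    (level n \<le> c \<longrightarrow> level n \<le> level (Suc n) \<and> level (Suc n) < level n + r)"
    using level_small_steps by blast
  obtain m where m: "N \<le> m" "c < level m"
    using not_eventually_level_le[of N] by auto
  obtain m' where m': "m \<le> m'" "\<not> c < level m'"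
    using not_eventually_level_gt[of m] by auto
  txt \<open>Once the level has crossed \<open>c\<close>, the small steps keep it within \<open>r\<close> of \<open>c\<close>.\<close>
  obtain k where k: "m \<le> k" "c < level k" "\<not> c < level (Suc k)"
    using nat_exists_transition[of "\<lambda>n. c < level n", OF m(2) m'(2,1)] by blast
  have "\<bar>level n - c\<bar> < r" if "Suc k \<le> n" for n
    using that
  proof (induction n rule: dec_induct)
    case base
    then show ?case using steps[of k] k m(1) by auto
  next
    case (step n)
    then show ?case using steps[of n] k m(1) by (auto simp: abs_less_iff)
  qed
  then show "\<exists>no. \<forall>n\<ge>no. norm (level n - c) < r"
    by auto
qed

text \<open>The positions receiving the displaced terms \<open>x (t 0), x (t 1), \<dots>\<close> in order: those
  whose own term is held back, and the positions of \<open>t\<close> not used for a release.\<close>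

definition t_slots :: "nat set" where
  "t_slots = {n. hold n} \<union> (range t - {n. release n})"

definition rearrangement :: "nat \<Rightarrow> nat" where
  "rearrangement n =
     (if release n then Min (held n)
      else if n \<in> t_slots then t (card (t_slots \<inter> {..<n})) else n)"

lemma infinite_t_slots: "infinite t_slots"
proof -
  have "infinite {n. hold n}"
    using hold_frequently by (simp add: infinite_nat_iff_unbounded_le)
  then show ?thesis
    by (rule infinite_super[rotated]) (auto simp: t_slots_def)
qed

lemma hold_eventually_released: "hold m \<Longrightarrow> \<exists>n. release n \<and> Min (held n) = m"
proof -
  assume "hold m"
  then have "m \<in> held (Suc m)"
    using release_not_hold by (auto simp: held_Suc)
  moreover obtain N where "\<And>n. N \<le> n \<Longrightarrow> held n \<inter> {..<Suc m} = {}"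
    using held_eventually_disjoint_lessThan by blast
  then have "m \<notin> held (max N (Suc m))"
    by (metis IntI disjoint_iff lessThan_iff lessI max.cobounded1)
  ultimately obtain n where "m \<in> held n" "m \<notin> held (Suc n)"
    using nat_exists_transition[of "\<lambda>n. m \<in> held n"] by (meson max.cobounded2)
  then show ?thesis
    by (auto simp: held_Suc split: if_splits)
qed

lemma bij_betw_release_hold: "bij_betw rearrangement {n. release n} {n. hold n}"
proof (rule bij_betw_imageI)
  show "inj_on rearrangement {n. release n}"
  proof (rule linorder_inj_onI')
    fix a b
    assume a: "a \<in> {n. release n}" and b: "b \<in> {n. release n}" and "a < b"
    have "rearrangement a \<notin> held (Suc a)" "rearrangement a < Suc a"
      using a Min_held_mem[of a] held_subset_lessThan[of a]
      by (auto simp: rearrangement_def held_Suc)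
    moreover have "rearrangement b \<in> held b"
      using b Min_held_mem by (simp add: rearrangement_def)
    ultimately show "rearrangement a \<noteq> rearrangement b"
      using held_Int_lessThan[of "Suc a" b] \<open>a < b\<close> by auto
  qed
  show "rearrangement ` {n. release n} = {n. hold n}"
    using Min_held_mem held_subset_hold hold_eventually_released
    by (force simp: rearrangement_def)
qed

lemma bij_betw_t_slots: "bij_betw rearrangement t_slots (range t)"
proof -
  have "bij_betw t UNIV (range t)"
    using strict_mono_imp_inj_on[OF t_strict_mono] by (rule inj_on_imp_bij_betw)
  then have "bij_betw (\<lambda>n. t (card (t_slots \<inter> {..<n}))) t_slots (range t)"
    using bij_betw_trans[OF bij_betw_card_Int_lessThan[OF infinite_t_slots]]
    by (simp add: comp_def)
  moreover have "\<not> release n" if "n \<in> t_slots" for n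
    using that release_not_hold by (auto simp: t_slots_def)
  then have "bij_betw rearrangement t_slots (range t) \<longleftrightarrow>
      bij_betw (\<lambda>n. t (card (t_slots \<inter> {..<n}))) t_slots (range t)"
    by (intro bij_betw_cong) (simp add: rearrangement_def)
  ultimately show ?thesis
    by simp
qed

lemma rearrangement_fixed: "\<not> hold n \<Longrightarrow> n \<notin> range t \<Longrightarrow> rearrangement n = n"
  by (auto simp: rearrangement_def t_slots_def release_def)

lemma bij_rearrangement: "bij rearrangement"
proof -
  let ?F = "- ({n. hold n} \<union> range t)"
  have "bij_betw rearrangement ?F ?F \<longleftrightarrow> bij_betw id ?F ?F"
    by (intro bij_betw_cong) (simp add: rearrangement_fixed)
  then have "bij_betw rearrangement ({n. release n} \<union> t_slots \<union> ?F) ({n. hold n} \<union> range t \<union> ?F)"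
    using bij_betw_release_hold bij_betw_t_slots
    by (intro bij_betw_combine) (auto simp: hold_def)
  moreover have "{n. release n} \<union> t_slots \<union> ?F = UNIV"
    by (auto simp: t_slots_def)
  moreover have "{n. hold n} \<union> range t \<union> ?F = UNIV"
    by blast
  ultimately show ?thesis
    by simp
qed

lemma supp_rearrangement: "supp rearrangement \<subseteq> P"
  using rearrangement_fixed range_t_subset by (auto simp: supp_def hold_def)

lemma t_card_range_Int_lessThan: "n \<in> range t \<Longrightarrow> t (card (range t \<inter> {..<n})) = n"
  using card_range_Int_lessThan[OF t_strict_mono] by auto

lemma rearrangement_diff:
  "x (rearrangement n) - x n = (level n - level (Suc n))
     + (if n \<in> t_slots then x (t (card (t_slots \<inter> {..<n}))) else 0)
     - (if n \<in> range t then x (t (card (range t \<inter> {..<n}))) else 0)"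
  using level_Suc[of n] release_not_hold[of n] t_card_range_Int_lessThan[of n]
  by (auto simp: rearrangement_def t_slots_def release_def hold_def)

lemma rearrangement_sums: "(\<lambda>n. x (rearrangement n)) sums (suminf x - c)"
proof -
  define A where "A N = (\<Sum>k<card (t_slots \<inter> {..<N}). x (t k))" for N
  define B where "B N = (\<Sum>k<card (range t \<inter> {..<N}). x (t k))" for N
  have partial_sums: "(\<Sum>n<N. x (rearrangement n)) = (\<Sum>n<N. x n) - level N + A N - B N" for N
  proof -
    have "(\<Sum>n<N. x (rearrangement n) - x n) = (\<Sum>n<N. level n - level (Suc n))
        + (\<Sum>n<N. if n \<in> t_slots then x (t (card (t_slots \<inter> {..<n}))) else 0)
        - (\<Sum>n<N. if n \<in> range t then x (t (card (range t \<inter> {..<n}))) else 0)"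
      by (simp add: rearrangement_diff sum.distrib sum_subtractf)
    also have "\<dots> = - level N + A N - B N"
      unfolding A_def B_def sum_lessThan_telescope'[of level]
        sum_if_mem_card_Int_lessThan[of t_slots "\<lambda>k. x (t k)"]
        sum_if_mem_card_Int_lessThan[of "range t" "\<lambda>k. x (t k)"]
      by simp
    finally show ?thesis
      by (simp add: sum_subtractf)
  qed
  have "infinite (range t)"
    using strict_mono_imp_inj_on[OF t_strict_mono] by (simp add: range_inj_infinite)
  then have "A \<longlonglongrightarrow> suminf (\<lambda>k. x (t k))" "B \<longlonglongrightarrow> suminf (\<lambda>k. x (t k))"
    unfolding A_def B_def using infinite_t_slots
    by (auto intro: filterlim_compose[OF summable_LIMSEQ[OF t_summable] filterlim_card_Int_lessThan])
  then have "(\<lambda>N. (\<Sum>n<N. x n) - level N + A N - B N) \<longlonglongrightarrow>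
      suminf x - c + suminf (\<lambda>k. x (t k)) - suminf (\<lambda>k. x (t k))"
    by (intro tendsto_intros summable_LIMSEQ[OF x_summable] level_tendsto)
  then show ?thesis
    unfolding sums_def partial_sums by simp
qed

end

lemma exists_perm_supported_sums_minus:
  fixes x :: "nat \<Rightarrow> real"
  assumes summable: "summable x" and pos: "\<And>n. n \<in> P \<Longrightarrow> 0 < x n"
    and not_summable: "\<not> x summable_on P" and "0 < c"
  shows "\<exists>\<sigma>. bij \<sigma> \<and> supp \<sigma> \<subseteq> P \<and> (\<lambda>n. x (\<sigma> n)) sums (suminf x - c)"
proof -
  have "infinite P"
    using not_summable summable_on_finite by blast
  have small: "\<exists>n. n \<in> P \<and> m < n \<and> x n \<le> (1/2)^k" for m k
  proof -
    obtain N where N: "\<And>n. N \<le> n \<Longrightarrow> \<bar>x n\<bar> < (1/2)^k"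
      using LIMSEQ_D[OF summable_LIMSEQ_zero[OF summable], of "(1/2)^k"] by auto
    obtain n where "n \<in> P" "max m N < n"
      using \<open>infinite P\<close> infinite_nat_iff_unbounded by blast
    with N[of n] show ?thesis
      by auto
  qed
  have "\<exists>t. \<forall>k. (t k \<in> P \<and> x (t k) \<le> (1/2)^k) \<and> t k < t (Suc k)"
    by (rule dependent_nat_choice) (use small in blast)+
  then obtain t where t: "\<And>k. t k \<in> P" "\<And>k. x (t k) \<le> (1/2)^k" "\<And>k. t k < t (Suc k)"
    by blast
  have "strict_mono t"
    using t(3) by (simp add: strict_mono_Suc_iff)
  have "norm (x (t k)) \<le> (1/2)^k" for k
    using t(1,2) pos[of "t k"] by simp
  then have t_summable: "summable (\<lambda>k. x (t k))"
    by (intro summable_comparison_test[OF _ summable_geometric[of "1/2::real"]]) auto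
  have "x summable_on range t"
    using summable_on_reindex[of t UNIV x] strict_mono_imp_inj_on[OF \<open>strict_mono t\<close>]
      summable_on_UNIV_nonneg_real_iff[of "\<lambda>k. x (t k)"] t_summable t(1) pos
    by (simp add: o_def less_imp_le)
  moreover have "P = (P - range t) \<union> range t"
    using t(1) by auto
  ultimately have "\<not> x summable_on (P - range t)"
    using not_summable summable_on_Un_disjoint[of x "P - range t" "range t"] by auto
  then interpret delayed_rearrangement x P c t
    using assms \<open>strict_mono t\<close> t(1) t_summable by unfold_locales auto
  show ?thesis
    using bij_rearrangement supp_rearrangement rearrangement_sums by blast
qed

lemma atMost_suminf_subset_SR:
  fixes x :: "nat \<Rightarrow> real"
  assumes summable: "summable x" and ideal: "ideal_on_nat I" and "A \<in> I"
    and not_summable: "\<not> (\<lambda>n. pos_part (x n)) summable_on A"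
  shows "{..suminf x} \<subseteq> SR I x"
proof
  fix r
  assume "r \<in> {..suminf x}"
  define P where "P = A \<inter> {n. 0 < x n}"
  have "\<not> x summable_on P"
  proof
    assume "x summable_on P"
    then have "(\<lambda>n. pos_part (x n)) summable_on A"
      by (subst summable_on_cong_neutral[where T = P and g = x]) (auto simp: P_def pos_part_def)
    with not_summable show False ..
  qed
  then obtain \<sigma> where "bij \<sigma>" "supp \<sigma> \<subseteq> P" "(\<lambda>n. x (\<sigma> n)) sums r"
  proof (cases "r = suminf x")
    case True
    then show ?thesis
      using that[of id] summable_sums[OF summable] by (simp add: supp_def)
  next
    case False
    then show ?thesis
      using that exists_perm_supported_sums_minus[OF summable _ \<open>\<not> x summable_on P\<close>, of "suminf x - r"]
        \<open>r \<in> {..suminf x}\<close> by (auto simp: P_def)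
  qed
  moreover have "supp \<sigma> \<in> I"
    using ideal \<open>A \<in> I\<close> \<open>supp \<sigma> \<subseteq> P\<close> by (auto simp: ideal_on_nat_def P_def)
  ultimately show "r \<in> SR I x"
    by (auto simp: SR_def)
qed

lemma SR_uminus: "SR I (\<lambda>n. - x n) = uminus ` SR I x"
proof -
  have "(\<lambda>n. - x (\<sigma> n)) sums s \<longleftrightarrow> (\<lambda>n. x (\<sigma> n)) sums - s" for \<sigma> s
    using sums_minus[of "\<lambda>n. x (\<sigma> n)" "- s"] sums_minus[of "\<lambda>n. - x (\<sigma> n)" s] by auto
  moreover have "s \<in> uminus ` SR I x \<longleftrightarrow> - s \<in> SR I x" for s
    by (auto intro: image_eqI[where x = "- s"])
  ultimately show ?thesis
    by (auto simp: SR_def)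
qed

lemma atLeast_suminf_subset_SR:
  fixes x :: "nat \<Rightarrow> real"
  assumes summable: "summable x" and ideal: "ideal_on_nat I" and "A \<in> I"
    and not_summable: "\<not> (\<lambda>n. neg_part (x n)) summable_on A"
  shows "{suminf x..} \<subseteq> SR I x"
proof -
  have "pos_part (- x n) = neg_part (x n)" for n
    by (simp add: pos_part_def neg_part_def)
  then have "{..- suminf x} \<subseteq> uminus ` SR I x"
    using atMost_suminf_subset_SR[OF summable_minus[OF summable] ideal \<open>A \<in> I\<close>] not_summable
    by (simp add: SR_uminus suminf_minus[OF summable])
  show ?thesis
  proof
    fix r
    assume "r \<in> {suminf x..}"
    with \<open>{..- suminf x} \<subseteq> uminus ` SR I x\<close> have "- r \<in> uminus ` SR I x"
      by auto
    then show "r \<in> SR I x"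
      by (auto simp: image_iff)
  qed
qed

lemma bij_betw_supp:
  assumes "bij \<sigma>"
  shows "bij_betw \<sigma> (supp \<sigma>) (supp \<sigma>)"
proof (rule bij_betw_imageI)
  show "inj_on \<sigma> (supp \<sigma>)"
    using bij_is_inj[OF assms] by (rule inj_on_subset) simp
  have supp_iff: "\<sigma> n \<in> supp \<sigma> \<longleftrightarrow> n \<in> supp \<sigma>" for n
    using bij_is_inj[OF assms] by (simp add: supp_def inj_eq)
  show "\<sigma> ` supp \<sigma> = supp \<sigma>"
  proof
    show "\<sigma> ` supp \<sigma> \<subseteq> supp \<sigma>"
      using supp_iff by blast
    show "supp \<sigma> \<subseteq> \<sigma> ` supp \<sigma>"
    proof
      fix m
      assume "m \<in> supp \<sigma>"
      obtain n where "m = \<sigma> n"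
        using bij_is_surj[OF assms] by blast
      with \<open>m \<in> supp \<sigma>\<close> supp_iff show "m \<in> \<sigma> ` supp \<sigma>"
        by blast
    qed
  qed
qed

lemma sums_reindex_if_abs_summable_on_supp:
  fixes x :: "nat \<Rightarrow> real"
  assumes summable: "summable x" and "bij \<sigma>" and abs_summable: "(\<lambda>n. \<bar>x n\<bar>) summable_on supp \<sigma>"
  shows "(\<lambda>n. x (\<sigma> n)) sums suminf x"
proof -
  define S where "S = supp \<sigma>"
  have x_has_sum: "(x has_sum infsum x S) S"
    using abs_summable summable_on_iff_abs_summable_on_real[of x S] by (simp add: S_def)
  then have "((\<lambda>n. x (\<sigma> n)) has_sum infsum x S) S"
    using has_sum_reindex_bij_betw[OF bij_betw_supp[OF \<open>bij \<sigma>\<close>], of x] by (simp add: S_def)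
  then have "((\<lambda>n. if n \<in> S then x (\<sigma> n) else 0) has_sum infsum x S) UNIV"
    by (subst has_sum_cong_neutral[where T = S]) auto
  moreover have "((\<lambda>n. if n \<in> S then x n else 0) has_sum infsum x S) UNIV"
    using x_has_sum by (subst has_sum_cong_neutral[where T = S]) auto
  ultimately have "(\<lambda>n. if n \<in> S then x n else 0) sums infsum x S"
    "(\<lambda>n. if n \<in> S then x (\<sigma> n) else 0) sums infsum x S"
    by (auto intro: has_sum_imp_sums)
  then have "(\<lambda>n. x n + (if n \<in> S then x (\<sigma> n) else 0) - (if n \<in> S then x n else 0)) sums
      (suminf x + infsum x S - infsum x S)"
    by (intro sums_diff sums_add summable_sums[OF summable])
  moreover have "x n + (if n \<in> S then x (\<sigma> n) else 0) - (if n \<in> S then x n else 0) = x (\<sigma> n)" for n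
    by (simp add: S_def supp_def)
  ultimately show ?thesis
    by simp
qed

lemma SR_eq_singleton_if_abs_summable_on:
  fixes x :: "nat \<Rightarrow> real"
  assumes "summable x" "{} \<in> I" "\<forall>A\<in>I. (\<lambda>n. \<bar>x n\<bar>) summable_on A"
  shows "SR I x = {suminf x}"
proof -
  have "suminf x \<in> SR I x"
    using assms(1,2) summable_sums[OF assms(1)] by (auto simp: SR_def supp_def intro!: exI[of _ id])
  moreover have "s = suminf x" if s: "s \<in> SR I x" for s
  proof -
    obtain \<sigma> where "bij \<sigma>" "supp \<sigma> \<in> I" "(\<lambda>n. x (\<sigma> n)) sums s"
      using s by (auto simp: SR_def)
    with assms(1,3) show ?thesis
      using sums_reindex_if_abs_summable_on_supp sums_unique2 by blast
  qed
  ultimately show ?thesis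
    by blast
qed

lemma abs_summable_on_iff_pos_neg_part:
  fixes x :: "nat \<Rightarrow> real"
  shows "(\<lambda>n. \<bar>x n\<bar>) summable_on A \<longleftrightarrow>
    (\<lambda>n. pos_part (x n)) summable_on A \<and> (\<lambda>n. neg_part (x n)) summable_on A"
proof
  assume abs: "(\<lambda>n. \<bar>x n\<bar>) summable_on A"
  show "(\<lambda>n. pos_part (x n)) summable_on A \<and> (\<lambda>n. neg_part (x n)) summable_on A"
    by (intro conjI summable_on_comparison_test[OF abs]) (auto simp: pos_part_def neg_part_def)
next
  assume "(\<lambda>n. pos_part (x n)) summable_on A \<and> (\<lambda>n. neg_part (x n)) summable_on A"
  then have "(\<lambda>n. pos_part (x n) + neg_part (x n)) summable_on A"
    by (auto intro: summable_on_add)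
  moreover have "pos_part (x n) + neg_part (x n) = \<bar>x n\<bar>" for n
    by (simp add: pos_part_def neg_part_def)
  ultimately show "(\<lambda>n. \<bar>x n\<bar>) summable_on A"
    by simp
qed

lemma SR_eq_singleton_iff:
  fixes x :: "nat \<Rightarrow> real"
  assumes summable: "summable x" and ideal: "ideal_on_nat I" and "{} \<in> I"
  shows "SR I x = {suminf x} \<longleftrightarrow> (\<forall>A\<in>I. (\<lambda>n. \<bar>x n\<bar>) summable_on A)"
proof
  assume singleton: "SR I x = {suminf x}"
  show "\<forall>A\<in>I. (\<lambda>n. \<bar>x n\<bar>) summable_on A"
  proof (rule ccontr)
    assume "\<not> ?thesis"
    then obtain A where "A \<in> I" "\<not> (\<lambda>n. \<bar>x n\<bar>) summable_on A"
      by blast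
    then have "\<not> (\<lambda>n. pos_part (x n)) summable_on A \<or> \<not> (\<lambda>n. neg_part (x n)) summable_on A"
      using abs_summable_on_iff_pos_neg_part by blast
    then have "{..suminf x} \<subseteq> SR I x \<or> {suminf x..} \<subseteq> SR I x"
      using atMost_suminf_subset_SR[OF summable ideal \<open>A \<in> I\<close>]
        atLeast_suminf_subset_SR[OF summable ideal \<open>A \<in> I\<close>] by blast
    moreover have "suminf x - 1 \<in> {..suminf x}" "suminf x + 1 \<in> {suminf x..}"
      by auto
    ultimately have "suminf x - 1 \<in> SR I x \<or> suminf x + 1 \<in> SR I x"
      by blast
    with singleton show False
      by auto
  qed
qed (rule SR_eq_singleton_if_abs_summable_on[OF summable \<open>{} \<in> I\<close>])

lemma SR_eq_UNIV:
  fixes x :: "nat \<Rightarrow> real"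
  assumes summable: "summable x" and ideal: "ideal_on_nat I" and "A \<in> I"
    and "\<not> (\<lambda>n. pos_part (x n)) summable_on A" "\<not> (\<lambda>n. neg_part (x n)) summable_on A"
  shows "SR I x = UNIV"
proof -
  have "{..suminf x} \<union> {suminf x..} \<subseteq> SR I x"
    using atMost_suminf_subset_SR[OF summable ideal] atLeast_suminf_subset_SR[OF summable ideal] assms(3-)
    by blast
  moreover have "{..suminf x} \<union> {suminf x..} = UNIV"
    by auto
  ultimately show ?thesis
    by blast
qed

lemma summable_on_if_not_summable_on_in_ideal:
  fixes f g :: "nat \<Rightarrow> real"
  assumes ideal: "ideal_on_nat I"
    and divergent: "\<forall>C\<in>I. \<not> f summable_on C \<longrightarrow> g summable_on C"
    and "A \<in> I" "\<not> f summable_on A" and "B \<in> I"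
  shows "g summable_on B"
proof -
  have "A \<union> B \<in> I"
    using ideal \<open>A \<in> I\<close> \<open>B \<in> I\<close> by (simp add: ideal_on_nat_def)
  moreover have "\<not> f summable_on (A \<union> B)"
    using \<open>\<not> f summable_on A\<close> summable_on_subset_banach[of f "A \<union> B" A] by blast
  ultimately have "g summable_on (A \<union> B)"
    using divergent by blast
  then show ?thesis
    using summable_on_subset_banach by blast
qed

theorem mainTheorem8:
  fixes x :: "nat \<Rightarrow> real" and I :: "nat set set"
  assumes cc: "conditionally_convergent x"
    and ideal: "ideal_on_nat I"
    and fin: "\<And>A. finite A \<Longrightarrow> A \<in> I"
  defines "H1 \<equiv> (\<forall>A\<in>I. (\<lambda>n. \<bar>x n\<bar>) summable_on A)"
    and "H2 \<equiv> (\<exists>A\<in>I. \<not> (\<lambda>n. pos_part (x n)) summable_on A \<and> \<not> (\<lambda>n. neg_part (x n)) summable_on A)"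
    and "H3 \<equiv> ((\<exists>A\<in>I. \<not> (\<lambda>n. pos_part (x n)) summable_on A) \<and>
              (\<forall>A\<in>I. \<not> (\<lambda>n. pos_part (x n)) summable_on A \<longrightarrow> (\<lambda>n. neg_part (x n)) summable_on A))"
    and "H4 \<equiv> ((\<exists>B\<in>I. \<not> (\<lambda>n. neg_part (x n)) summable_on B) \<and>
              (\<forall>B\<in>I. \<not> (\<lambda>n. neg_part (x n)) summable_on B \<longrightarrow> (\<lambda>n. pos_part (x n)) summable_on B))"
  shows "(SR I x = {suminf x} \<longleftrightarrow> H1)
    \<and> (H2 \<longrightarrow> SR I x = UNIV)
    \<and> (H3 \<longrightarrow> {..suminf x} \<subseteq> SR I x)
    \<and> (H4 \<longrightarrow> {suminf x..} \<subseteq> SR I x)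
    \<and> (H1 \<or> H2 \<or> H3 \<or> H4)
    \<and> \<not> (H1 \<and> H2) \<and> \<not> (H1 \<and> H3) \<and> \<not> (H1 \<and> H4)
    \<and> \<not> (H2 \<and> H3) \<and> \<not> (H2 \<and> H4) \<and> \<not> (H3 \<and> H4)"
proof -
  have summable: "summable x"
    using cc by (simp add: conditionally_convergent_def)
  have "SR I x = {suminf x} \<longleftrightarrow> H1"
    using SR_eq_singleton_iff[OF summable ideal fin[of "{}"]] by (simp add: H1_def)
  moreover have "H2 \<longrightarrow> SR I x = UNIV"
    using SR_eq_UNIV[OF summable ideal] by (auto simp: H2_def)
  moreover have "H3 \<longrightarrow> {..suminf x} \<subseteq> SR I x" "H4 \<longrightarrow> {suminf x..} \<subseteq> SR I x"
    using atMost_suminf_subset_SR[OF summable ideal] atLeast_suminf_subset_SR[OF summable ideal]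
    by (auto simp: H3_def H4_def)
  moreover have "\<not> (H3 \<and> H4)"
    using summable_on_if_not_summable_on_in_ideal[OF ideal] by (metis H3_def H4_def)
  moreover have "H1 \<or> H2 \<or> H3 \<or> H4" "\<not> (H1 \<and> H2)" "\<not> (H1 \<and> H3)" "\<not> (H1 \<and> H4)"
    "\<not> (H2 \<and> H3)" "\<not> (H2 \<and> H4)"
    unfolding H1_def H2_def H3_def H4_def using abs_summable_on_iff_pos_neg_part[of x] by blast+
  ultimately show ?thesis
    by blast
qed

end
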